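(* Let $\mathfrak{n}$ be a Heisenberg Lie algebra over $K$ of dimension $n\ge5$. Then every LR-structure on $\mathfrak{n}$ is complete, i.e. all its left multiplication operators are nilpotent.
   Context: $K$ is a field of characteristic zero. An LR-structure on a Lie algebra $\mathfrak{n}=(V,\{\,,\})$ is a bilinear product $x*y$ on $V$ such that for all $x,y,z\in V$: $x*y-y*x=\{x,y\}$, $x*(y*z)=y*(x*z)$, and $x*\{y,z\}=\{x*y,z\}+\{y,x*z\}$. It is complete if all left multiplications $y\mapsto x*y$ are nilpotent. The Heisenberg Lie algebra of dimension $2m+1$ has a basis $e_1,\dots,e_m,f_1,\dots,f_m,z$ with nonzero brackets $\{e_i,f_i\}=z$. *)

theory Defs
  imports Main
begin

text \<open>Vectors of a finite-dimensional K-vector space with basis indexed by a finite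
type 'a are functions 'a => K.  A bilinear product on such a space is exactly
one given by structure constants T i j k.\<close>

definition bilin_of :: "('a::finite \<Rightarrow> 'a \<Rightarrow> 'a \<Rightarrow> 'k::field) \<Rightarrow> ('a \<Rightarrow> 'k) \<Rightarrow> ('a \<Rightarrow> 'k) \<Rightarrow> ('a \<Rightarrow> 'k)"
  where "bilin_of T x y = (\<lambda>k. \<Sum>i\<in>UNIV. \<Sum>j\<in>UNIV. x i * y j * T i j k)"

text \<open>Heisenberg Lie algebra of dimension 2m+1, m = CARD('i): basis
e_i = Inl i, f_i = Inr (Inl i), z = Inr (Inr ()), with {e_i,f_i} = z.\<close>

type_synonym 'i heis_idx = "'i + 'i + unit"

definition heis_bracket :: "('i::finite heis_idx \<Rightarrow> 'k::field) \<Rightarrow> ('i heis_idx \<Rightarrow> 'k) \<Rightarrow> ('i heis_idx \<Rightarrow> 'k)"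
  where "heis_bracket x y = (\<lambda>k. if k = Inr (Inr ())
      then (\<Sum>i\<in>UNIV. x (Inl i) * y (Inr (Inl i)) - x (Inr (Inl i)) * y (Inl i))
      else 0)"

definition LR_structure :: "(('a \<Rightarrow> 'k::field) \<Rightarrow> ('a \<Rightarrow> 'k) \<Rightarrow> ('a \<Rightarrow> 'k))
     \<Rightarrow> (('a \<Rightarrow> 'k) \<Rightarrow> ('a \<Rightarrow> 'k) \<Rightarrow> ('a \<Rightarrow> 'k)) \<Rightarrow> bool"
  where "LR_structure br p \<longleftrightarrow>
     (\<forall>x y. (\<lambda>k. p x y k - p y x k) = br x y) \<and>
     (\<forall>x y z. p x (p y z) = p y (p x z)) \<and>
     (\<forall>x y z. p x (br y z) = (\<lambda>k. br (p x y) z k + br y (p x z) k))"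

definition complete_LR :: "(('a \<Rightarrow> 'k::field) \<Rightarrow> ('a \<Rightarrow> 'k) \<Rightarrow> ('a \<Rightarrow> 'k)) \<Rightarrow> bool"
  where "complete_LR p \<longleftrightarrow> (\<forall>x. \<exists>N. \<forall>y. (p x ^^ N) y = (\<lambda>_. 0))"

end

theory Submission
  imports Defs
begin

text \<open>Write the bracket as \<open>{x,y} = \<omega>(x,y) z\<close> with \<open>\<omega>\<close> the standard symplectic form, and
\<open>L\<^sub>x\<close> for left multiplication. Since \<open>L\<^sub>x\<close> is a derivation of the bracket, it maps
the centre to itself, \<open>L\<^sub>x z = \<lambda>(x) z\<close>, and \<open>\<omega>(L\<^sub>x y, w) + \<omega>(y, L\<^sub>x w) = \<lambda>(x) \<omega>(y, w)\<close>.
Because \<open>L\<^sub>x y - L\<^sub>y x\<close> is central, \<open>\<omega>(L\<^sub>x y, w)\<close> is symmetric in \<open>x, y\<close>, and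
summing the derivation identity cyclically yields
\<open>\<lambda>(x) \<omega>(y,w) + \<lambda>(y) \<omega>(w,x) + \<lambda>(w) \<omega>(x,y) = 0\<close>. When \<open>m \<ge> 2\<close> this forces \<open>\<lambda> = 0\<close>.
Then \<open>R(a,b,c,d) = \<omega>(L\<^sub>a L\<^sub>b c, d)\<close> is invariant under all permutations of \<open>a, b, c\<close>
and under \<open>a \<leftrightarrow> d\<close>, yet changes sign under \<open>(a,b) \<leftrightarrow> (c,d)\<close>; so \<open>R = 0\<close>, every
\<open>L\<^sub>a L\<^sub>b\<close> maps into the centre, and \<open>L\<^sub>x\<^sup>3 = 0\<close>.\<close>

definition heis_center :: "'i::finite heis_idx \<Rightarrow> 'k::field" where
  "heis_center = (\<lambda>k. if k = Inr (Inr ()) then 1 else 0)"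

definition heis_form :: "('i::finite heis_idx \<Rightarrow> 'k::field) \<Rightarrow> ('i heis_idx \<Rightarrow> 'k) \<Rightarrow> 'k" where
  "heis_form x y = (\<Sum>i\<in>UNIV. x (Inl i) * y (Inr (Inl i)) - x (Inr (Inl i)) * y (Inl i))"

definition heis_e :: "'i::finite \<Rightarrow> 'i heis_idx \<Rightarrow> 'k::field" where
  "heis_e j = (\<lambda>k. if k = Inl j then 1 else 0)"

definition heis_f :: "'i::finite \<Rightarrow> 'i heis_idx \<Rightarrow> 'k::field" where
  "heis_f j = (\<lambda>k. if k = Inr (Inl j) then 1 else 0)"

lemma heis_bracket_eq: "heis_bracket x y = (\<lambda>k. heis_form x y * heis_center k)"
  by (auto simp: heis_bracket_def heis_form_def heis_center_def)

lemma heis_form_center_left [simp]: "heis_form heis_center y = 0"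
  by (simp add: heis_form_def heis_center_def)

lemma heis_form_antisym: "heis_form x y = - heis_form y x"
  by (simp add: heis_form_def sum_negf[symmetric] algebra_simps)

lemma heis_form_add_scaled_left:
  "heis_form (\<lambda>k. u k + c * v k) w = heis_form u w + c * heis_form v w"
  by (simp add: heis_form_def algebra_simps sum.distrib sum_distrib_left sum_subtractf)

lemma heis_form_f: "heis_form x (heis_f j) = x (Inl j)"
proof -
  have "heis_form x (heis_f j) = (\<Sum>i\<in>UNIV. if i = j then x (Inl j) else 0)"
    unfolding heis_form_def heis_f_def by (rule sum.cong) auto
  then show ?thesis by simp
qed

lemma heis_form_e: "heis_form x (heis_e j) = - x (Inr (Inl j))"
proof -
  have "heis_form x (heis_e j) = (\<Sum>i\<in>UNIV. if i = j then - x (Inr (Inl j)) else 0)"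
    unfolding heis_form_def heis_e_def by (rule sum.cong) auto
  then show ?thesis by simp
qed

lemma heis_form_e_f [simp]: "heis_form (heis_e j) (heis_f j) = 1"
  by (simp add: heis_form_f heis_e_def)

lemma bilin_of_add_right: "bilin_of T x (\<lambda>k. u k + v k) = (\<lambda>k. bilin_of T x u k + bilin_of T x v k)"
  unfolding bilin_of_def by (rule ext) (simp add: algebra_simps sum.distrib)

lemma bilin_of_scale_right: "bilin_of T x (\<lambda>k. c * v k) = (\<lambda>k. c * bilin_of T x v k)"
  unfolding bilin_of_def by (rule ext) (simp add: algebra_simps sum_distrib_left)

locale heis_LR =
  fixes p :: "('i::finite heis_idx \<Rightarrow> 'k::field_char_0) \<Rightarrow> ('i heis_idx \<Rightarrow> 'k) \<Rightarrow> ('i heis_idx \<Rightarrow> 'k)"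
  assumes LR: "LR_structure heis_bracket p"
    and add_right: "p x (\<lambda>k. u k + v k) = (\<lambda>k. p x u k + p x v k)"
    and scale_right: "p x (\<lambda>k. c * v k) = (\<lambda>k. c * p x v k)"
begin

lemma commutator: "(\<lambda>k. p x y k - p y x k) = heis_bracket x y"
  and left_commutative: "p x (p y w) = p y (p x w)"
  and derivation: "p x (heis_bracket y w) = (\<lambda>k. heis_bracket (p x y) w k + heis_bracket y (p x w) k)"
  using LR unfolding LR_structure_def by blast+

lemma lmul_swap: "p x y = (\<lambda>k. p y x k + heis_form x y * heis_center k)"
proof
  fix k
  have "p x y k - p y x k = heis_form x y * heis_center k"
    using fun_cong[OF commutator[of x y], of k] by (simp add: heis_bracket_eq)
  then show "p x y k = p y x k + heis_form x y * heis_center k"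
    by (simp add: algebra_simps)
qed

lemma heis_form_lmul_swap: "heis_form (p x y) w = heis_form (p y x) w"
  by (subst lmul_swap) (simp add: heis_form_add_scaled_left)

definition center_eigenvalue :: "('i heis_idx \<Rightarrow> 'k) \<Rightarrow> 'k" where
  "center_eigenvalue x = p x heis_center (Inr (Inr ()))"

lemma lmul_center: "p x heis_center = (\<lambda>k. center_eigenvalue x * heis_center k)"
proof -
  let ?e = "heis_e undefined" and ?f = "heis_f undefined"
  have "p x heis_center = p x (heis_bracket ?e ?f)"
    by (simp add: heis_bracket_eq)
  also have "\<dots> = (\<lambda>k. (heis_form (p x ?e) ?f + heis_form ?e (p x ?f)) * heis_center k)"
    by (subst derivation) (simp add: heis_bracket_eq algebra_simps)
  finally have eq: "p x heis_center = (\<lambda>k. (heis_form (p x ?e) ?f + heis_form ?e (p x ?f)) * heis_center k)" .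
  then have "center_eigenvalue x = heis_form (p x ?e) ?f + heis_form ?e (p x ?f)"
    by (simp add: center_eigenvalue_def heis_center_def)
  with eq show ?thesis by simp
qed

lemma heis_form_derivation:
  "heis_form y w * center_eigenvalue x = heis_form (p x y) w + heis_form y (p x w)"
proof -
  have "p x (heis_bracket y w) (Inr (Inr ())) = heis_form y w * center_eigenvalue x"
    by (simp add: heis_bracket_eq scale_right lmul_center) (simp add: heis_center_def)
  moreover have "p x (heis_bracket y w) (Inr (Inr ())) = heis_form (p x y) w + heis_form y (p x w)"
    by (subst derivation) (simp add: heis_bracket_eq heis_center_def)
  ultimately show ?thesis by simp
qed

lemma center_eigenvalue_cyclic:
  "center_eigenvalue x * heis_form y w + center_eigenvalue y * heis_form w x
     + center_eigenvalue w * heis_form x y = 0"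
proof -
  have "\<And>x y w. heis_form y w * center_eigenvalue x = heis_form (p x y) w - heis_form (p x w) y"
    using heis_form_derivation heis_form_antisym by (metis diff_conv_add_uminus)
  then have "center_eigenvalue x * heis_form y w + center_eigenvalue y * heis_form w x
       + center_eigenvalue w * heis_form x y
     = (heis_form (p x y) w - heis_form (p x w) y) + (heis_form (p y w) x - heis_form (p y x) w)
       + (heis_form (p w x) y - heis_form (p w y) x)"
    by (simp add: mult.commute)
  also have "\<dots> = 0"
    using heis_form_lmul_swap[of x y w] heis_form_lmul_swap[of w x y] heis_form_lmul_swap[of y w x]
    by simp
  finally show ?thesis .
qed

lemma center_eigenvalue_expand:
  "center_eigenvalue x = center_eigenvalue (heis_e j) * x (Inl j)
     + center_eigenvalue (heis_f j) * x (Inr (Inl j))"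
proof -
  have "heis_form (heis_f j) x = - x (Inl j)"
    using heis_form_antisym[of "heis_f j" x] by (simp add: heis_form_f)
  then show ?thesis
    using center_eigenvalue_cyclic[of x "heis_e j" "heis_f j"]
    by (simp add: heis_form_e algebra_simps add_eq_0_iff2)
qed

end

locale heis_LR_dim_ge_5 = heis_LR p for p :: "('i::finite heis_idx \<Rightarrow> 'k::field_char_0) \<Rightarrow> _" +
  assumes card_ge_2: "card (UNIV :: 'i set) \<ge> 2"
begin

lemma center_eigenvalue_eq_0: "center_eigenvalue x = 0"
proof -
  obtain i j :: 'i where "i \<noteq> j"
    using card_ge_2 card_le_Suc0_iff_eq[of "UNIV :: 'i set"] by force
  then have "center_eigenvalue (heis_e j) = 0" "center_eigenvalue (heis_f j) = 0"
    using center_eigenvalue_expand[of "heis_e j" i] center_eigenvalue_expand[of "heis_f j" i]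
    by (simp_all add: heis_e_def heis_f_def)
  then show ?thesis
    using center_eigenvalue_expand[of x j] by simp
qed

lemma lmul_center_eq_0: "p x heis_center = (\<lambda>_. 0)"
  by (simp add: lmul_center center_eigenvalue_eq_0)

lemma heis_form_lmul_skew: "heis_form (p x y) w = heis_form (p x w) y"
  using heis_form_derivation[of y w x] heis_form_antisym[of y "p x w"]
  by (simp add: center_eigenvalue_eq_0 add_eq_0_iff)

lemma lmul_lmul_swap: "p a (p b c) = p a (p c b)"
  by (subst lmul_swap) (simp add: add_right scale_right lmul_center_eq_0)

lemma heis_form_lmul_lmul_eq_0: "heis_form (p a (p b c)) d = 0"
proof -
  define R where "R a b c d = heis_form (p a (p b c)) d" for a b c d
  have R_pair: "R a b c d = heis_form (p d a) (p b c)" for a b c d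
    unfolding R_def using heis_form_lmul_skew heis_form_lmul_swap by metis
  have "R a b c d = R d b c a" for a b c d
    unfolding R_def using heis_form_lmul_skew heis_form_lmul_swap by metis
  moreover have "R a b c d = R b a c d" for a b c d
    unfolding R_def using left_commutative by metis
  moreover have "R a b c d = R a c b d" for a b c d
    unfolding R_def using lmul_lmul_swap by metis
  ultimately have "R c d a b = R a b c d"
    by metis
  moreover have "R c d a b = - R a b c d"
    using R_pair heis_form_antisym by metis
  ultimately show ?thesis
    unfolding R_def by simp
qed

lemma lmul_lmul_central: "p a (p b c) = (\<lambda>k. p a (p b c) (Inr (Inr ())) * heis_center k)"
proof
  fix k
  show "p a (p b c) k = p a (p b c) (Inr (Inr ())) * heis_center k"
  proof (cases k)
    case (Inl j)
    then show ?thesis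
      using heis_form_lmul_lmul_eq_0[of a b c "heis_f j"] by (simp add: heis_form_f heis_center_def)
  next
    case (Inr k')
    then show ?thesis
      using heis_form_lmul_lmul_eq_0[of a b c "heis_e (projl k')"]
      by (cases k') (auto simp: heis_form_e heis_center_def)
  qed
qed

lemma lmul_cube_eq_0: "(p x ^^ 3) y = (\<lambda>_. 0)"
proof -
  have "(p x ^^ 3) y = p x (p x (p x y))"
    by (simp add: numeral_3_eq_3)
  also have "\<dots> = (\<lambda>_. 0)"
    by (subst lmul_lmul_central) (simp add: scale_right lmul_center_eq_0)
  finally show ?thesis .
qed

lemma complete: "complete_LR p"
  unfolding complete_LR_def using lmul_cube_eq_0 by blast

end

theorem corollary4p12:
  fixes T :: "'i::finite heis_idx \<Rightarrow> 'i heis_idx \<Rightarrow> 'i heis_idx \<Rightarrow> 'k::field_char_0"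
  assumes "card (UNIV :: 'i set) \<ge> 2"
    and "LR_structure heis_bracket (bilin_of T)"
  shows "complete_LR (bilin_of T)"
proof -
  interpret heis_LR_dim_ge_5 "bilin_of T"
    using assms by unfold_locales (simp_all add: bilin_of_add_right bilin_of_scale_right)
  show ?thesis by (rule complete)
qed

end
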